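(* Assume (A1)–(A3), the latent index model (LI), $\Gamma^{Wald}\succ0$, and let $\omega^{PRTE}$ be as defined below. Let $e(u)=\bar h(u;\omega^{PRTE})-w^P(u)$, which satisfies $\int_0^1e(u)du=0$, and let $\Delta=\beta^*(\omega^{PRTE})-\mathrm{PRTE}=\int_0^1\mathrm{MTE}(u)e(u)du$, where $\mathrm{PRTE}=\int_0^1\mathrm{MTE}(u)w^P(u)du$. (a) If $|\mathrm{MTE}(u)-\mathrm{MTE}(v)|\le M|u-v|$ for all $u,v\in[0,1]$, then $|\Delta|\le\frac{M}{2\sqrt3}\|e\|_{L^2}$. (b) Let $\mathcal M$ be a set of pairs of marginal treatment response functions $(m_0,m_1)$ on $[0,1]$ (with $\mathrm{MTE}=m_1-m_0$) that contains the true pair, and let $\mathcal M_S=\{(m_0,m_1)\in\mathcal M:\int_0^1[m_1(u)-m_0(u)]h_\ell(u)du=\mathrm{Wald}_\ell\ \forall\ell\}$. Then $\Delta\in[\inf_{(m_0,m_1)\in\mathcal M_S}\Delta,\ \sup_{(m_0,m_1)\in\mathcal M_S}\Delta]$, where $\Delta$ on the right is the functional $\int_0^1[m_1(u)-m_0(u)]e(u)du$.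
   Context: Observe i.i.d. $(Y_i,D_i,\mathbf Z_i)$, $Y_i\in\mathbb R$, $D_i\in\{0,1\}$, $\mathbf Z_i\in\{0,1\}^L$, $L\ge2$; potential outcomes $Y_i(0),Y_i(1)$, compliance type $D_i(\cdot):\{0,1\}^L\to\{0,1\}$, $D_i=D_i(\mathbf Z_i)$, $Y_i=D_iY_i(1)+(1-D_i)Y_i(0)$. $p_\ell=P(Z_{\ell i}=1)$, $\pi_\ell,\rho_\ell$ the differences of $\mathbb E[D_i\mid Z_{\ell i}=z]$, $\mathbb E[Y_i\mid Z_{\ell i}=z]$ between $z=1,0$, $\mathrm{Wald}_\ell=\rho_\ell/\pi_\ell$, $\gamma_\ell=\mathrm{Cov}(D_i,Z_{\ell i})$, $\Sigma_Z=\mathrm{Var}(\mathbf Z_i)$, $\beta^*(\omega)=\sum_\ell\omega_\ell\mathrm{Wald}_\ell$. $\Gamma^{Wald}_{\ell k}=\mathbb E[\tilde\epsilon_{i,\ell}\tilde\epsilon_{i,k}(Z_{\ell i}-p_\ell)(Z_{ki}-p_k)]/(\gamma_\ell\gamma_k)$, $\tilde\epsilon_{i,\ell}=Y_i-\mathrm{Wald}_\ell D_i-(\mathbb E[Y_i]-\mathrm{Wald}_\ell\mathbb E[D_i])$. (LI): $D_i=\mathbf 1\{V(\mathbf Z_i)\ge U_i\}$, $U_i\sim\mathrm{Uniform}(0,1)$ conditional on potential outcomes; $p(z)=V(z)$; $\mathrm{MTE}(u)=\mathbb E[Y_i(1)-Y_i(0)\mid U_i=u]$; $h_\ell(u)=\frac{P(p(\mathbf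 Z_i)\ge u\mid Z_{\ell i}=1)-P(p(\mathbf Z_i)\ge u\mid Z_{\ell i}=0)}{\mathbb E[p(\mathbf Z_i)\mid Z_{\ell i}=1]-\mathbb E[p(\mathbf Z_i)\mid Z_{\ell i}=0]}$, $\bar h(u;\omega)=\sum_\ell\omega_\ell h_\ell(u)$. For a policy moving the instrument distribution from $F_0$ to $F_1$, $w^P(u)=(F_0(u)-F_1(u))/\int_0^1(F_0-F_1)$ with $F_j(u)=P(p(\mathbf Z_i)\ge u\mid\text{policy }j)$. $\omega^{PRTE}$ is the unique minimizer of $\omega'\Gamma^{Wald}\omega$ over $\mathcal S=\arg\min_{\omega\in\Delta^{L-1}}\int_0^1[\bar h(u;\omega)-w^P(u)]^2du$, $\Delta^{L-1}$ the probability simplex. Assumptions: (A1) $(Y_i(0),Y_i(1),D_i(\cdot))$ independent of $\mathbf Z_i$. (A2) $D_i(z)$ nondecreasing in each coordinate for every $i$. (A3) $p_\ell>0$, $\pi_\ell>0$ for all $\ell$; $\Sigma_Z$ positive definite. *)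

theory Defs
  imports "HOL-Probability.Probability"
begin

text \<open>Instruments Z take values in 'L \<Rightarrow> bool (i.e. {0,1}^L with L = CARD('L)).
  V is the index function, which equals the propensity score p.\<close>

type_synonym 'L instr = "'L \<Rightarrow> bool"

definition Dobs :: "('L instr \<Rightarrow> real) \<Rightarrow> ('a \<Rightarrow> real) \<Rightarrow> ('a \<Rightarrow> 'L instr) \<Rightarrow> 'a \<Rightarrow> real"
  where "Dobs V U Z = (\<lambda>x. if U x \<le> V (Z x) then 1 else 0)"

definition Yobs :: "('L instr \<Rightarrow> real) \<Rightarrow> ('a \<Rightarrow> real) \<Rightarrow> ('a \<Rightarrow> 'L instr)
    \<Rightarrow> ('a \<Rightarrow> real) \<Rightarrow> ('a \<Rightarrow> real) \<Rightarrow> 'a \<Rightarrow> real"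
  where "Yobs V U Z Y0 Y1 = (\<lambda>x. Dobs V U Z x * Y1 x + (1 - Dobs V U Z x) * Y0 x)"

definition Zr :: "('a \<Rightarrow> 'L instr) \<Rightarrow> 'L \<Rightarrow> 'a \<Rightarrow> real"
  where "Zr Z l = (\<lambda>x. if Z x l then 1 else 0)"

definition cexp_ev :: "'a measure \<Rightarrow> ('a \<Rightarrow> real) \<Rightarrow> 'a set \<Rightarrow> real"
  where "cexp_ev M X A = (\<integral>x. indicator A x * X x \<partial>M) / measure M A"

definition pz :: "'a measure \<Rightarrow> ('a \<Rightarrow> 'L instr) \<Rightarrow> 'L \<Rightarrow> real"
  where "pz M Z l = measure M {x \<in> space M. Z x l}"

definition diffZ :: "'a measure \<Rightarrow> ('a \<Rightarrow> 'L instr) \<Rightarrow> ('a \<Rightarrow> real) \<Rightarrow> 'L \<Rightarrow> real"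
  where "diffZ M Z X l = cexp_ev M X {x \<in> space M. Z x l} - cexp_ev M X {x \<in> space M. \<not> Z x l}"

definition covar :: "'a measure \<Rightarrow> ('a \<Rightarrow> real) \<Rightarrow> ('a \<Rightarrow> real) \<Rightarrow> real"
  where "covar M X W = (\<integral>x. X x * W x \<partial>M) - (\<integral>x. X x \<partial>M) * (\<integral>x. W x \<partial>M)"

definition pi_fs :: "'a measure \<Rightarrow> ('L instr \<Rightarrow> real) \<Rightarrow> ('a \<Rightarrow> real) \<Rightarrow> ('a \<Rightarrow> 'L instr) \<Rightarrow> 'L \<Rightarrow> real"
  where "pi_fs M V U Z l = diffZ M Z (Dobs V U Z) l"

definition rho_rf :: "'a measure \<Rightarrow> ('L instr \<Rightarrow> real) \<Rightarrow> ('a \<Rightarrow> real) \<Rightarrow> ('a \<Rightarrow> 'L instr)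
    \<Rightarrow> ('a \<Rightarrow> real) \<Rightarrow> ('a \<Rightarrow> real) \<Rightarrow> 'L \<Rightarrow> real"
  where "rho_rf M V U Z Y0 Y1 l = diffZ M Z (Yobs V U Z Y0 Y1) l"

definition Wald :: "'a measure \<Rightarrow> ('L instr \<Rightarrow> real) \<Rightarrow> ('a \<Rightarrow> real) \<Rightarrow> ('a \<Rightarrow> 'L instr)
    \<Rightarrow> ('a \<Rightarrow> real) \<Rightarrow> ('a \<Rightarrow> real) \<Rightarrow> 'L \<Rightarrow> real"
  where "Wald M V U Z Y0 Y1 l = rho_rf M V U Z Y0 Y1 l / pi_fs M V U Z l"

definition gammaZ :: "'a measure \<Rightarrow> ('L instr \<Rightarrow> real) \<Rightarrow> ('a \<Rightarrow> real) \<Rightarrow> ('a \<Rightarrow> 'L instr) \<Rightarrow> 'L \<Rightarrow> real"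
  where "gammaZ M V U Z l = covar M (Dobs V U Z) (Zr Z l)"

definition SigmaZ_pd :: "'a measure \<Rightarrow> ('a \<Rightarrow> ('L::finite) instr) \<Rightarrow> bool"
  where "SigmaZ_pd M Z = (\<forall>c::'L \<Rightarrow> real. c \<noteq> (\<lambda>_. 0) \<longrightarrow>
            0 < (\<Sum>l\<in>UNIV. \<Sum>k\<in>UNIV. c l * c k * covar M (Zr Z l) (Zr Z k)))"

definition eps_tilde :: "'a measure \<Rightarrow> ('L instr \<Rightarrow> real) \<Rightarrow> ('a \<Rightarrow> real) \<Rightarrow> ('a \<Rightarrow> 'L instr)
    \<Rightarrow> ('a \<Rightarrow> real) \<Rightarrow> ('a \<Rightarrow> real) \<Rightarrow> 'L \<Rightarrow> 'a \<Rightarrow> real"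
  where "eps_tilde M V U Z Y0 Y1 l = (\<lambda>x.
     Yobs V U Z Y0 Y1 x - Wald M V U Z Y0 Y1 l * Dobs V U Z x
     - ((\<integral>y. Yobs V U Z Y0 Y1 y \<partial>M) - Wald M V U Z Y0 Y1 l * (\<integral>y. Dobs V U Z y \<partial>M)))"

definition GammaWald :: "'a measure \<Rightarrow> ('L instr \<Rightarrow> real) \<Rightarrow> ('a \<Rightarrow> real) \<Rightarrow> ('a \<Rightarrow> 'L instr)
    \<Rightarrow> ('a \<Rightarrow> real) \<Rightarrow> ('a \<Rightarrow> real) \<Rightarrow> 'L \<Rightarrow> 'L \<Rightarrow> real"
  where "GammaWald M V U Z Y0 Y1 l k =
     (\<integral>x. eps_tilde M V U Z Y0 Y1 l x * eps_tilde M V U Z Y0 Y1 k x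
           * (Zr Z l x - pz M Z l) * (Zr Z k x - pz M Z k) \<partial>M)
     / (gammaZ M V U Z l * gammaZ M V U Z k)"

definition quadform :: "('L::finite \<Rightarrow> 'L \<Rightarrow> real) \<Rightarrow> ('L \<Rightarrow> real) \<Rightarrow> real"
  where "quadform G w = (\<Sum>l\<in>UNIV. \<Sum>k\<in>UNIV. w l * w k * G l k)"

definition pos_def :: "('L::finite \<Rightarrow> 'L \<Rightarrow> real) \<Rightarrow> bool"
  where "pos_def G = (\<forall>w. w \<noteq> (\<lambda>_. 0) \<longrightarrow> 0 < quadform G w)"

definition beta_star :: "'a measure \<Rightarrow> ('L instr \<Rightarrow> real) \<Rightarrow> ('a \<Rightarrow> real) \<Rightarrow> ('a \<Rightarrow> ('L::finite) instr)
    \<Rightarrow> ('a \<Rightarrow> real) \<Rightarrow> ('a \<Rightarrow> real) \<Rightarrow> ('L \<Rightarrow> real) \<Rightarrow> real"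
  where "beta_star M V U Z Y0 Y1 w = (\<Sum>l\<in>UNIV. w l * Wald M V U Z Y0 Y1 l)"

definition hfun :: "'a measure \<Rightarrow> ('L instr \<Rightarrow> real) \<Rightarrow> ('a \<Rightarrow> 'L instr) \<Rightarrow> 'L \<Rightarrow> real \<Rightarrow> real"
  where "hfun M V Z l u =
     diffZ M Z (\<lambda>x. if u \<le> V (Z x) then 1 else 0) l / diffZ M Z (\<lambda>x. V (Z x)) l"

definition hbar :: "'a measure \<Rightarrow> ('L instr \<Rightarrow> real) \<Rightarrow> ('a \<Rightarrow> ('L::finite) instr) \<Rightarrow> ('L \<Rightarrow> real) \<Rightarrow> real \<Rightarrow> real"
  where "hbar M V Z w u = (\<Sum>l\<in>UNIV. w l * hfun M V Z l u)"

text \<open>Policy j induces instrument distribution Q_j; F_j(u) = P(p(Z) \<ge> u | policy j).\<close>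
definition Fpol :: "('L instr \<Rightarrow> real) \<Rightarrow> 'L instr pmf \<Rightarrow> real \<Rightarrow> real"
  where "Fpol V Q u = measure_pmf.prob Q {z. u \<le> V z}"

definition wP :: "('L instr \<Rightarrow> real) \<Rightarrow> 'L instr pmf \<Rightarrow> 'L instr pmf \<Rightarrow> real \<Rightarrow> real"
  where "wP V Q0 Q1 u = (Fpol V Q0 u - Fpol V Q1 u)
            / (LINT t:{0..1}|lborel. Fpol V Q0 t - Fpol V Q1 t)"

definition prob_simplex :: "('L::finite \<Rightarrow> real) set"
  where "prob_simplex = {w. (\<forall>l. 0 \<le> w l) \<and> sum w UNIV = 1}"

definition Jfit :: "'a measure \<Rightarrow> ('L instr \<Rightarrow> real) \<Rightarrow> ('a \<Rightarrow> ('L::finite) instr)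
    \<Rightarrow> 'L instr pmf \<Rightarrow> 'L instr pmf \<Rightarrow> ('L \<Rightarrow> real) \<Rightarrow> real"
  where "Jfit M V Z Q0 Q1 w = (LINT u:{0..1}|lborel. (hbar M V Z w u - wP V Q0 Q1 u)\<^sup>2)"

definition Sset :: "'a measure \<Rightarrow> ('L instr \<Rightarrow> real) \<Rightarrow> ('a \<Rightarrow> ('L::finite) instr)
    \<Rightarrow> 'L instr pmf \<Rightarrow> 'L instr pmf \<Rightarrow> ('L \<Rightarrow> real) set"
  where "Sset M V Z Q0 Q1 = {w \<in> prob_simplex. \<forall>w' \<in> prob_simplex. Jfit M V Z Q0 Q1 w \<le> Jfit M V Z Q0 Q1 w'}"

definition is_omega_PRTE :: "'a measure \<Rightarrow> ('L instr \<Rightarrow> real) \<Rightarrow> ('a \<Rightarrow> real) \<Rightarrow> ('a \<Rightarrow> ('L::finite) instr)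
    \<Rightarrow> ('a \<Rightarrow> real) \<Rightarrow> ('a \<Rightarrow> real) \<Rightarrow> 'L instr pmf \<Rightarrow> 'L instr pmf \<Rightarrow> ('L \<Rightarrow> real) \<Rightarrow> bool"
  where "is_omega_PRTE M V U Z Y0 Y1 Q0 Q1 w =
     (w \<in> Sset M V Z Q0 Q1 \<and>
      (\<forall>w' \<in> Sset M V Z Q0 Q1. quadform (GammaWald M V U Z Y0 Y1) w \<le> quadform (GammaWald M V U Z Y0 Y1) w'))"

definition efun :: "'a measure \<Rightarrow> ('L instr \<Rightarrow> real) \<Rightarrow> ('a \<Rightarrow> ('L::finite) instr)
    \<Rightarrow> 'L instr pmf \<Rightarrow> 'L instr pmf \<Rightarrow> ('L \<Rightarrow> real) \<Rightarrow> real \<Rightarrow> real"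
  where "efun M V Z Q0 Q1 w u = hbar M V Z w u - wP V Q0 Q1 u"

definition indep_rvs :: "'a measure \<Rightarrow> 'b measure \<Rightarrow> ('a \<Rightarrow> 'b) \<Rightarrow> 'c measure \<Rightarrow> ('a \<Rightarrow> 'c) \<Rightarrow> bool"
  where "indep_rvs M Ma X Mb W =
     (X \<in> measurable M Ma \<and> W \<in> measurable M Mb \<and>
      (\<forall>A \<in> sets Ma. \<forall>B \<in> sets Mb.
         measure M (X -` A \<inter> W -` B \<inter> space M) = measure M (X -` A \<inter> space M) * measure M (W -` B \<inter> space M)))"

definition is_cond_mean_given :: "'a measure \<Rightarrow> ('a \<Rightarrow> real) \<Rightarrow> ('a \<Rightarrow> real) \<Rightarrow> (real \<Rightarrow> real) \<Rightarrow> bool"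
  where "is_cond_mean_given M U X m =
     (m \<in> borel_measurable borel \<and>
      (AE x in M. real_cond_exp M (vimage_algebra (space M) U borel) X x = m (U x)))"

end

theory Submission
  imports Defs
begin

(*
  Under the latent index model and (A1), conditioning on Z turns every Wald contrast into a fixed
  linear combination, with weights instr_weight, of z |-> E[D | Z = z] = V z and of
  z |-> E[Y | Z = z] = E Y(0) + int_0^(V z) MTE. Hence each h_l integrates to 1 and
  int MTE h_l = Wald_l, so beta*(w) = int MTE hbar(w) for any weights summing to one; as w^P also
  integrates to 1, Delta = int MTE e with int e = 0. For (a), subtracting MTE(1/2) does not change
  this integral, and Cauchy-Schwarz with int_0^1 (u - 1/2)^2 = 1/12 gives the bound. For (b), the
  true pair (m0, m1) lies in M_S, so Delta is among the values whose infimum and supremum are taken.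
*)

section \<open>Independent random variables and finitely-valued instruments\<close>

lemma sigma_sets_measurable_preimages:
  assumes "X \<in> measurable M S"
  shows "sigma_sets (space M) {X -` A \<inter> space M |A. A \<in> sets S} = {X -` A \<inter> space M |A. A \<in> sets S}"
  using sets_vimage_algebra[of "space M" X S] sets_vimage_algebra2[of X "space M" S] measurable_space[OF assms]
  by auto

lemma (in prob_space) indep_var_compose_indep_rvs:
  assumes indep: "indep_rvs M S X T Y" and g: "g \<in> measurable S N" and h: "h \<in> measurable T N"
  shows "indep_var N (\<lambda>x. g (X x)) N (\<lambda>x. h (Y x))"
proof -
  have X: "random_variable S X" and Y: "random_variable T Y"
    and prod: "\<And>A B. A \<in> sets S \<Longrightarrow> B \<in> sets T \<Longrightarrow>
      prob (X -` A \<inter> Y -` B \<inter> space M) = prob (X -` A \<inter> space M) * prob (Y -` B \<inter> space M)"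
    using indep unfolding indep_rvs_def by auto
  have gX: "random_variable N (\<lambda>x. g (X x))" and hY: "random_variable N (\<lambda>x. h (Y x))"
    using X Y g h by measurable
  have "prob (((\<lambda>x. g (X x)) -` A \<inter> space M) \<inter> ((\<lambda>x. h (Y x)) -` B \<inter> space M))
      = prob ((\<lambda>x. g (X x)) -` A \<inter> space M) * prob ((\<lambda>x. h (Y x)) -` B \<inter> space M)"
    if "A \<in> sets N" "B \<in> sets N" for A B
  proof -
    define A' where "A' = g -` A \<inter> space S"
    define B' where "B' = h -` B \<inter> space T"
    have "A' \<in> sets S" "B' \<in> sets T"
      using that g h by (auto simp: A'_def B'_def measurable_sets)
    moreover have "(\<lambda>x. g (X x)) -` A \<inter> space M = X -` A' \<inter> space M"
      and "(\<lambda>x. h (Y x)) -` B \<inter> space M = Y -` B' \<inter> space M"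
      using measurable_space[OF X] measurable_space[OF Y] by (auto simp: A'_def B'_def)
    moreover have "(X -` A' \<inter> space M) \<inter> (Y -` B' \<inter> space M) = X -` A' \<inter> Y -` B' \<inter> space M"
      by blast
    ultimately show ?thesis
      using prod by presburger
  qed
  then show ?thesis
    unfolding indep_var_eq indep_sets2_eq sigma_sets_measurable_preimages[OF gX] sigma_sets_measurable_preimages[OF hY]
    using gX hY by (auto simp: measurable_sets)
qed

lemma (in prob_space) integral_indep_rvs_mult:
  fixes g :: "'b \<Rightarrow> real" and h :: "'c \<Rightarrow> real"
  assumes "indep_rvs M S X T Y" "g \<in> borel_measurable S" "h \<in> borel_measurable T"
    and "integrable M (\<lambda>x. g (X x))" "integrable M (\<lambda>x. h (Y x))"
  shows "(\<integral>x. g (X x) * h (Y x) \<partial>M) = (\<integral>x. g (X x) \<partial>M) * (\<integral>x. h (Y x) \<partial>M)"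
  using indep_var_compose_indep_rvs[OF assms(1-3)] assms(4,5)
  by (intro indep_var_lebesgue_integral) auto

lemma (in prob_space) integral_finite_rv:
  fixes Z :: "'a \<Rightarrow> 'z::finite" and F :: "'z \<Rightarrow> real"
  assumes Z: "Z \<in> measurable M (count_space UNIV)"
  shows "(\<integral>x. F (Z x) \<partial>M) = (\<Sum>z\<in>UNIV. prob {x\<in>space M. Z x = z} * F z)"
proof -
  have events: "{x\<in>space M. Z x = z} \<in> events" for z
    using Z by measurable
  have "(\<integral>x. F (Z x) \<partial>M) = (\<integral>x. (\<Sum>z\<in>UNIV. F z * indicator {x\<in>space M. Z x = z} x) \<partial>M)"
    by (intro Bochner_Integration.integral_cong) (auto simp: indicator_def)
  also have "\<dots> = (\<Sum>z\<in>UNIV. prob {x\<in>space M. Z x = z} * F z)"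
    using events by (subst Bochner_Integration.integral_sum) (auto simp: mult.commute emeasure_eq_measure)
  finally show ?thesis .
qed

lemma (in prob_space) integral_indep_rvs_freeze:
  fixes Z :: "'a \<Rightarrow> 'z::finite" and Phi :: "'w \<Rightarrow> 'z \<Rightarrow> real"
  assumes indep: "indep_rvs M S W (count_space UNIV) Z"
    and Phi_meas: "\<And>z. (\<lambda>w. Phi w z) \<in> borel_measurable S"
    and Phi_int: "\<And>z. integrable M (\<lambda>x. Phi (W x) z)"
  shows "(\<integral>x. Phi (W x) (Z x) * G (Z x) \<partial>M)
    = (\<integral>x. (\<integral>y. Phi (W y) (Z x) \<partial>M) * G (Z x) \<partial>M)"
proof -
  have Z: "Z \<in> measurable M (count_space UNIV)"
    using indep by (simp add: indep_rvs_def)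
  have ind_int: "integrable M (\<lambda>x. indicator {z} (Z x) :: real)" for z
    using Z by (intro integrable_const_bound[where B=1]) auto
  have "(\<integral>x. Phi (W x) (Z x) * G (Z x) \<partial>M)
      = (\<integral>x. (\<Sum>z\<in>UNIV. G z * Phi (W x) z * indicator {z} (Z x)) \<partial>M)"
    by (intro Bochner_Integration.integral_cong) (auto simp: indicator_def)
  also have "\<dots> = (\<Sum>z\<in>UNIV. G z * (\<integral>x. Phi (W x) z * indicator {z} (Z x) \<partial>M))"
    using Phi_int Z
    by (subst Bochner_Integration.integral_sum)
      (auto intro!: Bochner_Integration.integrable_bound[OF Phi_int] simp: indicator_def mult.assoc)
  also have "\<dots> = (\<Sum>z\<in>UNIV. G z * ((\<integral>x. Phi (W x) z \<partial>M) * prob {x\<in>space M. Z x = z}))"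
    using integral_indep_rvs_mult[OF indep Phi_meas _ Phi_int ind_int] integral_finite_rv[OF Z, of "indicator {_}"]
    by simp
  also have "\<dots> = (\<integral>x. (\<integral>y. Phi (W y) (Z x) \<partial>M) * G (Z x) \<partial>M)"
    by (subst integral_finite_rv[OF Z, of "\<lambda>z. (\<integral>y. Phi (W y) z \<partial>M) * G z"]) (simp add: ac_simps)
  finally show ?thesis .
qed

definition instr_weight :: "'a measure \<Rightarrow> ('a \<Rightarrow> 'L instr) \<Rightarrow> 'L \<Rightarrow> 'L instr \<Rightarrow> real" where
  "instr_weight M Z l z =
     (if z l then measure M {x\<in>space M. Z x = z} / measure M {x\<in>space M. Z x l}
      else - (measure M {x\<in>space M. Z x = z} / measure M {x\<in>space M. \<not> Z x l}))"

lemma (in prob_space) cexp_ev_finite_rv: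
  fixes Z :: "'a \<Rightarrow> 'z::finite" and F :: "'z \<Rightarrow> real"
  assumes Z: "Z \<in> measurable M (count_space UNIV)"
  shows "cexp_ev M (\<lambda>x. F (Z x)) {x\<in>space M. P (Z x)}
    = (\<Sum>z\<in>UNIV. (if P z then prob {x\<in>space M. Z x = z} / prob {x\<in>space M. P (Z x)} else 0) * F z)"
proof -
  have "(\<integral>x. indicator {x\<in>space M. P (Z x)} x * F (Z x) \<partial>M)
      = (\<integral>x. (if P (Z x) then F (Z x) else 0) \<partial>M)"
    by (intro Bochner_Integration.integral_cong) (auto simp: indicator_def)
  then show ?thesis
    unfolding cexp_ev_def integral_finite_rv[OF Z, of "\<lambda>z. if P z then F z else 0"]
    by (auto simp: sum_divide_distrib intro!: sum.cong)
qed

lemma (in prob_space) diffZ_fun_eq_sum: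
  fixes Z :: "'a \<Rightarrow> ('L::finite) instr"
  assumes Z: "Z \<in> measurable M (count_space UNIV)"
  shows "diffZ M Z (\<lambda>x. F (Z x)) l = (\<Sum>z\<in>UNIV. instr_weight M Z l z * F z)"
  unfolding diffZ_def cexp_ev_finite_rv[OF Z, of F "\<lambda>z. z l"] cexp_ev_finite_rv[OF Z, of F "\<lambda>z. \<not> z l"]
  by (auto simp: sum_subtractf[symmetric] instr_weight_def intro!: sum.cong)

lemma (in prob_space) diffZ_indep_eq_sum:
  fixes Z :: "'a \<Rightarrow> ('L::finite) instr" and Phi :: "'w \<Rightarrow> 'L instr \<Rightarrow> real"
  assumes indep: "indep_rvs M S W (count_space UNIV) Z"
    and Phi_meas: "\<And>z. (\<lambda>w. Phi w z) \<in> borel_measurable S"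
    and Phi_int: "\<And>z. integrable M (\<lambda>x. Phi (W x) z)"
  shows "diffZ M Z (\<lambda>x. Phi (W x) (Z x)) l = (\<Sum>z\<in>UNIV. instr_weight M Z l z * (\<integral>y. Phi (W y) z \<partial>M))"
proof -
  have Z: "Z \<in> measurable M (count_space UNIV)"
    using indep by (simp add: indep_rvs_def)
  have "cexp_ev M (\<lambda>x. Phi (W x) (Z x)) {x\<in>space M. P (Z x)}
      = cexp_ev M (\<lambda>x. \<integral>y. Phi (W y) (Z x) \<partial>M) {x\<in>space M. P (Z x)}" for P
  proof -
    have "(\<integral>x. indicator {x\<in>space M. P (Z x)} x * Phi (W x) (Z x) \<partial>M)
        = (\<integral>x. Phi (W x) (Z x) * (if P (Z x) then 1 else 0) \<partial>M)"
      by (intro Bochner_Integration.integral_cong) (auto simp: indicator_def)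
    also have "\<dots> = (\<integral>x. (\<integral>y. Phi (W y) (Z x) \<partial>M) * (if P (Z x) then 1 else 0) \<partial>M)"
      by (rule integral_indep_rvs_freeze[OF indep Phi_meas Phi_int])
    also have "\<dots> = (\<integral>x. indicator {x\<in>space M. P (Z x)} x * (\<integral>y. Phi (W y) (Z x) \<partial>M) \<partial>M)"
      by (intro Bochner_Integration.integral_cong) (auto simp: indicator_def)
    finally show ?thesis
      unfolding cexp_ev_def by simp
  qed
  from this[of "\<lambda>z. z l"] this[of "\<lambda>z. \<not> z l"] show ?thesis
    unfolding diffZ_fun_eq_sum[OF Z, symmetric] diffZ_def by simp
qed

section \<open>A uniformly distributed latent index\<close>

lemma uniform_measure_01_eq_density:
  "uniform_measure lborel {0..1::real} = density lborel (\<lambda>x. ennreal (indicator {0..1} x))"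
  unfolding uniform_measure_def by (simp add: ennreal_indicator divide_ennreal_def)

lemma integral_uniform_01:
  fixes g :: "real \<Rightarrow> real"
  assumes U: "U \<in> borel_measurable M" and unif: "distr M lborel U = uniform_measure lborel {0..1}"
    and g: "g \<in> borel_measurable borel"
  shows "(\<integral>x. g (U x) \<partial>M) = (LINT u:{0..1}|lborel. g u)"
proof -
  have "(\<integral>x. g (U x) \<partial>M) = integral\<^sup>L (distr M lborel U) g"
    using U g by (simp add: integral_distr)
  also have "\<dots> = (LINT u:{0..1}|lborel. g u)"
    using g by (simp add: unif uniform_measure_01_eq_density integral_density set_lebesgue_integral_def)
  finally show ?thesis .
qed

lemma integrable_uniform_01_iff:
  fixes g :: "real \<Rightarrow> real"
  assumes U: "U \<in> borel_measurable M" and unif: "distr M lborel U = uniform_measure lborel {0..1}"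
    and g: "g \<in> borel_measurable borel"
  shows "integrable M (\<lambda>x. g (U x)) \<longleftrightarrow> set_integrable lborel {0..1} g"
proof -
  have "integrable M (\<lambda>x. g (U x)) \<longleftrightarrow> integrable (distr M lborel U) g"
    using U g by (simp add: integrable_distr_eq)
  also have "\<dots> \<longleftrightarrow> set_integrable lborel {0..1} g"
    using g by (simp add: unif uniform_measure_01_eq_density integrable_density set_integrable_def)
  finally show ?thesis .
qed

lemma (in prob_space) is_cond_mean_given_uniform:
  fixes g :: "real \<Rightarrow> real"
  assumes U: "U \<in> borel_measurable M" and unif: "distr M lborel U = uniform_measure lborel {0..1}"
    and Y: "integrable M Y" and m: "is_cond_mean_given M U Y m"
    and g: "g \<in> borel_measurable borel" and g_bound: "\<And>u. \<bar>g u\<bar> \<le> B"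
  shows "(\<integral>x. g (U x) * Y x \<partial>M) = (LINT u:{0..1}|lborel. g u * m u)"
    and "set_integrable lborel {0..1} m"
proof -
  define F where "F = vimage_algebra (space M) U borel"
  have m_meas: "m \<in> borel_measurable borel" and m_AE: "AE x in M. real_cond_exp M F Y x = m (U x)"
    using m unfolding is_cond_mean_given_def F_def by auto
  interpret finite_measure_subalgebra M F
    by unfold_locales (use U in \<open>auto simp: subalgebra_def F_def sets_vimage_algebra2 measurable_sets\<close>)
  have U_F: "U \<in> borel_measurable F"
    unfolding F_def using U by (intro measurable_vimage_algebra1) (simp add: measurable_space)
  have gY: "integrable M (\<lambda>x. g (U x) * Y x)"
  proof (rule Bochner_Integration.integrable_bound)
    show "integrable M (\<lambda>x. B * Y x)"
      using Y by simp
    show "(\<lambda>x. g (U x) * Y x) \<in> borel_measurable M"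
      using U g borel_measurable_integrable[OF Y] by measurable
    have "\<bar>g u\<bar> * \<bar>y\<bar> \<le> \<bar>B\<bar> * \<bar>y\<bar>" for u y :: real
      using g_bound[of u] by (intro mult_right_mono) auto
    then show "AE x in M. norm (g (U x) * Y x) \<le> norm (B * Y x)"
      by (simp add: abs_mult)
  qed
  have "(\<integral>x. g (U x) * Y x \<partial>M) = (\<integral>x. g (U x) * real_cond_exp M F Y x \<partial>M)"
    using gY U_F g borel_measurable_integrable[OF Y] by (intro real_cond_exp_intg(2)[symmetric]) auto
  also have "\<dots> = (\<integral>x. g (U x) * m (U x) \<partial>M)"
    using m_AE U g m_meas by (intro integral_cong_AE) auto
  also have "\<dots> = (LINT u:{0..1}|lborel. g u * m u)"
    using U unif g m_meas by (intro integral_uniform_01) auto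
  finally show "(\<integral>x. g (U x) * Y x \<partial>M) = (LINT u:{0..1}|lborel. g u * m u)" .
  have "integrable M (\<lambda>x. m (U x))"
    using real_cond_exp_int(1)[OF Y] by (rule integrable_cong_AE_imp) (use m_AE U m_meas in auto)
  then show "set_integrable lborel {0..1} m"
    using integrable_uniform_01_iff[OF U unif m_meas] by simp
qed

section \<open>Square-integrable functions on the unit interval\<close>

lemma integral_Cauchy_Schwarz:
  fixes f g :: "'a \<Rightarrow> real"
  assumes [measurable]: "f \<in> borel_measurable M" "g \<in> borel_measurable M"
    and f2: "integrable M (\<lambda>x. (f x)\<^sup>2)" and g2: "integrable M (\<lambda>x. (g x)\<^sup>2)"
  shows "\<bar>\<integral>x. f x * g x \<partial>M\<bar> \<le> sqrt (\<integral>x. (f x)\<^sup>2 \<partial>M) * sqrt (\<integral>x. (g x)\<^sup>2 \<partial>M)"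
proof -
  let ?fg = "\<integral>x. f x * g x \<partial>M"
  have "ennreal \<bar>?fg\<bar> \<le> (\<integral>\<^sup>+x. ennreal \<bar>f x\<bar> * ennreal \<bar>g x\<bar> \<partial>M)"
  proof (cases "integrable M (\<lambda>x. f x * g x)")
    case True
    then show ?thesis
      using integral_norm_bound_ennreal[OF True] by (simp add: abs_mult ennreal_mult'')
  qed (simp add: not_integrable_integral_eq)
  then have "(ennreal \<bar>?fg\<bar>)\<^sup>2 \<le> (\<integral>\<^sup>+x. ennreal \<bar>f x\<bar> * ennreal \<bar>g x\<bar> \<partial>M)\<^sup>2"
    by (rule power_mono) simp
  also have "\<dots> \<le> (\<integral>\<^sup>+x. (ennreal \<bar>f x\<bar>)\<^sup>2 \<partial>M) * (\<integral>\<^sup>+x. (ennreal \<bar>g x\<bar>)\<^sup>2 \<partial>M)"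
    by (rule Cauchy_Schwarz_nn_integral) auto
  also have "\<dots> = ennreal ((\<integral>x. (f x)\<^sup>2 \<partial>M) * (\<integral>x. (g x)\<^sup>2 \<partial>M))"
    using f2 g2 by (simp add: ennreal_power nn_integral_eq_integral ennreal_mult'')
  finally have "\<bar>?fg\<bar>\<^sup>2 \<le> (\<integral>x. (f x)\<^sup>2 \<partial>M) * (\<integral>x. (g x)\<^sup>2 \<partial>M)"
    using f2 g2 by (simp add: ennreal_power)
  then show ?thesis
    by (simp add: real_le_rsqrt real_sqrt_mult[symmetric])
qed

lemma set_integral_Cauchy_Schwarz:
  fixes f g :: "'a \<Rightarrow> real"
  assumes "set_borel_measurable M A f" "set_borel_measurable M A g"
    and "set_integrable M A (\<lambda>x. (f x)\<^sup>2)" "set_integrable M A (\<lambda>x. (g x)\<^sup>2)"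
  shows "\<bar>LINT x:A|M. f x * g x\<bar> \<le> sqrt (LINT x:A|M. (f x)\<^sup>2) * sqrt (LINT x:A|M. (g x)\<^sup>2)"
proof -
  have sq: "(indicator A x * h)\<^sup>2 = indicator A x * h\<^sup>2" for x and h :: real
    by (simp add: indicator_def)
  have prod: "(\<lambda>x. indicator A x * f x * (indicator A x * g x)) = (\<lambda>x. indicator A x * (f x * g x))"
    by (simp add: fun_eq_iff indicator_def)
  show ?thesis
    using integral_Cauchy_Schwarz[of "\<lambda>x. indicator A x * f x" M "\<lambda>x. indicator A x * g x", unfolded sq prod]
      assms
    unfolding set_lebesgue_integral_def set_integrable_def set_borel_measurable_def by simp
qed

definition bounded_borel_01 :: "(real \<Rightarrow> real) \<Rightarrow> bool" where
  "bounded_borel_01 f \<longleftrightarrow> f \<in> borel_measurable borel \<and> (\<exists>B. \<forall>u\<in>{0..1}. \<bar>f u\<bar> \<le> B)"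

lemma bounded_borel_01_const: "bounded_borel_01 (\<lambda>u. c)"
  unfolding bounded_borel_01_def by auto

lemma bounded_borel_01_step: "bounded_borel_01 (\<lambda>u. if u \<le> c then 1 else 0)"
  unfolding bounded_borel_01_def by (auto intro!: exI[of _ 1])

lemma bounded_borel_01_add:
  assumes "bounded_borel_01 f" "bounded_borel_01 g"
  shows "bounded_borel_01 (\<lambda>u. f u + g u)"
proof -
  obtain B C where "\<forall>u\<in>{0..1}. \<bar>f u\<bar> \<le> B" "\<forall>u\<in>{0..1}. \<bar>g u\<bar> \<le> C"
    using assms unfolding bounded_borel_01_def by blast
  then have "\<forall>u\<in>{0..1}. \<bar>f u + g u\<bar> \<le> B + C"
    by (auto intro: order.trans[OF abs_triangle_ineq] add_mono)
  then show ?thesis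
    using assms unfolding bounded_borel_01_def by auto
qed

lemma bounded_borel_01_mult:
  assumes "bounded_borel_01 f" "bounded_borel_01 g"
  shows "bounded_borel_01 (\<lambda>u. f u * g u)"
proof -
  obtain B C where "\<forall>u\<in>{0..1}. \<bar>f u\<bar> \<le> B" "\<forall>u\<in>{0..1}. \<bar>g u\<bar> \<le> C"
    using assms unfolding bounded_borel_01_def by blast
  then have "\<forall>u\<in>{0..1}. \<bar>f u * g u\<bar> \<le> B * C"
    by (auto simp: abs_mult intro!: mult_mono)
  then show ?thesis
    using assms unfolding bounded_borel_01_def by auto
qed

lemma bounded_borel_01_diff:
  "bounded_borel_01 f \<Longrightarrow> bounded_borel_01 g \<Longrightarrow> bounded_borel_01 (\<lambda>u. f u - g u)"
  using bounded_borel_01_add[of f "\<lambda>u. - 1 * g u"] bounded_borel_01_mult bounded_borel_01_const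
  by fastforce

lemma bounded_borel_01_divide: "bounded_borel_01 f \<Longrightarrow> bounded_borel_01 (\<lambda>u. f u / c)"
  using bounded_borel_01_mult[OF _ bounded_borel_01_const, of f "1 / c"] by simp

lemma bounded_borel_01_sum:
  "finite I \<Longrightarrow> (\<And>i. i \<in> I \<Longrightarrow> bounded_borel_01 (f i))
    \<Longrightarrow> bounded_borel_01 (\<lambda>u. \<Sum>i\<in>I. f i u)"
  by (induction I rule: finite_induct) (auto intro: bounded_borel_01_const bounded_borel_01_add)

lemma set_integrable_mult_bounded_borel_01:
  assumes g: "set_integrable lborel {0..1} g" and f: "bounded_borel_01 f"
  shows "set_integrable lborel {0..1} (\<lambda>u. g u * f u)"
proof -
  obtain B where f_meas: "f \<in> borel_measurable borel" and B: "\<And>u. u \<in> {0..1} \<Longrightarrow> \<bar>f u\<bar> \<le> B"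
    using f unfolding bounded_borel_01_def by blast
  have "(\<lambda>u. indicator {0..1} u *\<^sub>R g u) \<in> borel_measurable lborel"
    using g unfolding set_integrable_def by (rule borel_measurable_integrable)
  then have gf_meas: "(\<lambda>u. indicator {0..1} u *\<^sub>R g u * f u) \<in> borel_measurable lborel"
    using f_meas by measurable
  show ?thesis
  proof (rule set_integrable_bound[OF set_integrable_mult_right[OF g, of B]])
    show "set_borel_measurable lborel {0..1} (\<lambda>u. g u * f u)"
      unfolding set_borel_measurable_def using gf_meas by (simp add: ac_simps)
    show "AE u in lborel. u \<in> {0..1} \<longrightarrow> norm (g u * f u) \<le> norm (B * g u)"
      using B by (auto intro!: AE_I2 mult_right_mono simp: abs_mult mult.commute intro: order.trans[OF _ abs_ge_self])
  qed
qed

lemma set_integrable_bounded_borel_01: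
  "bounded_borel_01 f \<Longrightarrow> set_integrable lborel {0..1} f"
  using set_integrable_mult_bounded_borel_01[of "\<lambda>_. 1" f]
  by (simp add: borel_integrable_atLeastAtMost')

lemma set_integral_sum:
  fixes f :: "'i \<Rightarrow> 'a \<Rightarrow> real"
  assumes "finite I" "\<And>i. i \<in> I \<Longrightarrow> set_integrable M A (f i)"
  shows "(LINT x:A|M. (\<Sum>i\<in>I. f i x)) = (\<Sum>i\<in>I. LINT x:A|M. f i x)"
  using assms unfolding set_lebesgue_integral_def set_integrable_def
  by (subst scaleR_sum_right) (rule Bochner_Integration.integral_sum)

lemma integral_step_01:
  assumes "0 \<le> c" "c \<le> 1"
  shows "(LINT u:{0..1}|lborel. (if u \<le> c then 1 else 0 :: real)) = c"
proof -
  have "(LINT u:{0..1}|lborel. (if u \<le> c then 1 else 0 :: real)) = (\<integral>u. indicator {0..c} u \<partial>lborel)"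
    unfolding set_lebesgue_integral_def
    by (intro Bochner_Integration.integral_cong) (use assms in \<open>auto simp: indicator_def\<close>)
  then show ?thesis
    using assms by simp
qed

lemma integral_centered_square_01: "(LINT u:{0..1}|lborel. (u - 1/2)\<^sup>2) = (1/12 :: real)"
proof -
  have "(LINT u:{0..1}|lborel. (u - 1/2)\<^sup>2) = (1 - 1/2)^3/3 - (0 - 1/2)^3/(3::real)"
    unfolding set_lebesgue_integral_def
  proof (rule integral_FTC_atLeastAtMost)
    fix x :: real
    show "((\<lambda>x. (x - 1/2)^3/3) has_vector_derivative (x - 1/2)\<^sup>2) (at x within {0..1})"
      unfolding has_real_derivative_iff_has_vector_derivative[symmetric]
      by (auto intro!: derivative_eq_intros simp: power2_eq_square)
  qed (auto intro!: continuous_intros)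
  then show ?thesis
    by (simp add: power3_eq_cube)
qed

lemma Lipschitz_01_const_nonneg:
  fixes m :: "real \<Rightarrow> real"
  assumes Lip: "\<forall>u\<in>{0..1}. \<forall>v\<in>{0..1}. \<bar>m u - m v\<bar> \<le> B * \<bar>u - v\<bar>"
  shows "0 \<le> B"
proof -
  have "\<bar>m 0 - m 1\<bar> \<le> B * \<bar>0 - 1\<bar>"
    using Lip[rule_format, of 0 1] by simp
  then show ?thesis
    by simp
qed

lemma Lipschitz_01_imp_bounded_borel_01:
  fixes m :: "real \<Rightarrow> real"
  assumes m: "m \<in> borel_measurable borel"
    and Lip: "\<forall>u\<in>{0..1}. \<forall>v\<in>{0..1}. \<bar>m u - m v\<bar> \<le> B * \<bar>u - v\<bar>"
  shows "bounded_borel_01 m"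
  unfolding bounded_borel_01_def
proof (intro conjI exI ballI)
  show "m \<in> borel_measurable borel"
    by (rule m)
  fix u :: real
  assume u: "u \<in> {0..1}"
  have "\<bar>m u - m 0\<bar> \<le> B * \<bar>u - 0\<bar>"
    using Lip[rule_format, of u 0] u by simp
  also have "\<dots> \<le> B"
    using u Lipschitz_01_const_nonneg[OF Lip] by (simp add: mult_left_le)
  finally show "\<bar>m u\<bar> \<le> \<bar>m 0\<bar> + B"
    by linarith
qed

lemma Lipschitz_01_centered_square_integral:
  fixes m :: "real \<Rightarrow> real"
  assumes m: "m \<in> borel_measurable borel"
    and Lip: "\<forall>u\<in>{0..1}. \<forall>v\<in>{0..1}. \<bar>m u - m v\<bar> \<le> B * \<bar>u - v\<bar>"
  shows "(LINT u:{0..1}|lborel. (m u - m (1/2))\<^sup>2) \<le> B\<^sup>2 / 12"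
proof -
  have m_centered: "bounded_borel_01 (\<lambda>u. m u - m (1/2))"
    by (intro bounded_borel_01_diff Lipschitz_01_imp_bounded_borel_01[OF m Lip] bounded_borel_01_const)
  have "(LINT u:{0..1}|lborel. (m u - m (1/2))\<^sup>2) \<le> (LINT u:{0..1}|lborel. B\<^sup>2 * (u - 1/2)\<^sup>2)"
  proof (rule set_integral_mono)
    show "set_integrable lborel {0..1} (\<lambda>u. (m u - m (1/2))\<^sup>2)"
      using set_integrable_bounded_borel_01[OF bounded_borel_01_mult[OF m_centered m_centered]]
      by (simp add: power2_eq_square)
    show "set_integrable lborel {0..1} (\<lambda>u. B\<^sup>2 * (u - 1/2)\<^sup>2)"
      by (rule borel_integrable_atLeastAtMost') (intro continuous_intros)
    fix u :: real
    assume "u \<in> {0..1}"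
    then have "\<bar>m u - m (1/2)\<bar> \<le> B * \<bar>u - 1/2\<bar>"
      using Lip[rule_format, of u "1/2"] by simp
    from power_mono[OF this, of 2] show "(m u - m (1/2))\<^sup>2 \<le> B\<^sup>2 * (u - 1/2)\<^sup>2"
      by (simp add: power_mult_distrib)
  qed
  then show ?thesis
    using integral_centered_square_01 by simp
qed

lemma Lipschitz_integral_error_bound:
  fixes m e :: "real \<Rightarrow> real"
  assumes m: "m \<in> borel_measurable borel"
    and Lip: "\<forall>u\<in>{0..1}. \<forall>v\<in>{0..1}. \<bar>m u - m v\<bar> \<le> B * \<bar>u - v\<bar>"
    and e: "bounded_borel_01 e" and e_mean: "(LINT u:{0..1}|lborel. e u) = 0"
  shows "\<bar>LINT u:{0..1}|lborel. m u * e u\<bar> \<le> B / (2 * sqrt 3) * sqrt (LINT u:{0..1}|lborel. (e u)\<^sup>2)"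
proof -
  define f where "f u = m u - m (1/2)" for u
  have f: "bounded_borel_01 f"
    unfolding f_def
    by (intro bounded_borel_01_diff Lipschitz_01_imp_bounded_borel_01[OF m Lip] bounded_borel_01_const)
  have "(LINT u:{0..1}|lborel. m u * e u) = (LINT u:{0..1}|lborel. f u * e u + m (1/2) * e u)"
    unfolding f_def by (simp add: algebra_simps)
  also have "\<dots> = (LINT u:{0..1}|lborel. f u * e u)"
    using set_integrable_bounded_borel_01[OF bounded_borel_01_mult[OF f e]]
      set_integrable_bounded_borel_01[OF e] e_mean by simp
  finally have mean_removed: "(LINT u:{0..1}|lborel. m u * e u) = (LINT u:{0..1}|lborel. f u * e u)" .
  have f_norm: "sqrt (LINT u:{0..1}|lborel. (f u)\<^sup>2) \<le> B / (2 * sqrt 3)"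
    using Lipschitz_01_centered_square_integral[OF m Lip] Lipschitz_01_const_nonneg[OF Lip] unfolding f_def
    by (intro real_le_lsqrt) (auto simp: power_divide power_mult_distrib)
  have "\<bar>LINT u:{0..1}|lborel. f u * e u\<bar>
      \<le> sqrt (LINT u:{0..1}|lborel. (f u)\<^sup>2) * sqrt (LINT u:{0..1}|lborel. (e u)\<^sup>2)"
    using f e set_integrable_bounded_borel_01[OF bounded_borel_01_mult[OF f f]]
      set_integrable_bounded_borel_01[OF bounded_borel_01_mult[OF e e]]
    by (intro set_integral_Cauchy_Schwarz)
      (auto simp: bounded_borel_01_def set_borel_measurable_def power2_eq_square)
  also have "\<dots> \<le> B / (2 * sqrt 3) * sqrt (LINT u:{0..1}|lborel. (e u)\<^sup>2)"
    using f_norm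
    by (intro mult_right_mono) (auto simp: set_lebesgue_integral_def intro!: Bochner_Integration.integral_nonneg)
  finally show ?thesis
    unfolding mean_removed .
qed

section \<open>The latent index model\<close>

lemma Fpol_eq_sum:
  fixes V :: "('L::finite) instr \<Rightarrow> real"
  shows "Fpol V Q u = (\<Sum>z\<in>UNIV. pmf Q z * (if u \<le> V z then 1 else 0))"
proof -
  have "Fpol V Q u = sum (pmf Q) {z. u \<le> V z}"
    unfolding Fpol_def by (simp add: measure_measure_pmf_finite)
  also have "\<dots> = (\<Sum>z\<in>UNIV. if u \<le> V z then pmf Q z else 0)"
    using sum.inter_filter[of UNIV "pmf Q" "\<lambda>z. u \<le> V z"] by simp
  also have "\<dots> = (\<Sum>z\<in>UNIV. pmf Q z * (if u \<le> V z then 1 else 0))"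
    by (intro sum.cong) auto
  finally show ?thesis .
qed

lemma bounded_borel_01_wP:
  fixes V :: "('L::finite) instr \<Rightarrow> real"
  shows "bounded_borel_01 (wP V Q0 Q1)"
  unfolding wP_def[abs_def] Fpol_eq_sum
  by (intro bounded_borel_01_divide bounded_borel_01_diff bounded_borel_01_sum bounded_borel_01_mult
      bounded_borel_01_const bounded_borel_01_step) auto

lemma integral_wP:
  assumes "(LINT t:{0..1}|lborel. Fpol V Q0 t - Fpol V Q1 t) \<noteq> 0"
  shows "(LINT u:{0..1}|lborel. wP V Q0 Q1 u) = 1"
  using assms unfolding wP_def by simp

lemma SigmaZ_pd_imp_covar_diag_pos:
  fixes Z :: "'a \<Rightarrow> ('L::finite) instr"
  assumes "SigmaZ_pd M Z"
  shows "0 < covar M (Zr Z l) (Zr Z l)"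
proof -
  define c where "c k = (if k = l then 1 else 0 :: real)" for k
  have "c \<noteq> (\<lambda>_. 0)"
    unfolding c_def by (auto dest: fun_cong[of _ _ l])
  then have "0 < (\<Sum>k\<in>UNIV. \<Sum>k'\<in>UNIV. c k * c k' * covar M (Zr Z k) (Zr Z k'))"
    using assms unfolding SigmaZ_pd_def by blast
  also have "\<dots> = (\<Sum>k\<in>UNIV. if k = l then covar M (Zr Z k) (Zr Z l) else 0)"
  proof (intro sum.cong refl)
    fix k
    have "(\<Sum>k'\<in>UNIV. c k * c k' * covar M (Zr Z k) (Zr Z k'))
        = (\<Sum>k'\<in>UNIV. if k' = l then c k * covar M (Zr Z k) (Zr Z k') else 0)"
      by (intro sum.cong) (auto simp: c_def)
    then show "(\<Sum>k'\<in>UNIV. c k * c k' * covar M (Zr Z k) (Zr Z k'))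
        = (if k = l then covar M (Zr Z k) (Zr Z l) else 0)"
      by (simp add: c_def)
  qed
  finally show ?thesis
    by simp
qed

locale latent_index_model = prob_space M
  for M :: "'a measure" and Y0 Y1 U :: "'a \<Rightarrow> real" and Z :: "'a \<Rightarrow> ('L::finite) instr"
    and V :: "'L instr \<Rightarrow> real" and m0 m1 :: "real \<Rightarrow> real" +
  assumes Y0_int: "integrable M Y0" and Y1_int: "integrable M Y1"
    and U_rv: "U \<in> borel_measurable M"
    and U_unif: "distr M lborel U = uniform_measure lborel {0..1}"
    and V_range: "\<And>z. V z \<in> {0..1}"
    and indep: "indep_rvs M (borel \<Otimes>\<^sub>M borel \<Otimes>\<^sub>M borel) (\<lambda>x. (Y0 x, Y1 x, U x)) (count_space UNIV) Z"
    and instr_pos: "\<And>l. pz M Z l > 0"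
    and SigmaZ: "SigmaZ_pd M Z"
    and first_stage_pos: "\<And>l. pi_fs M V U Z l > 0"
    and m0: "is_cond_mean_given M U Y0 m0" and m1: "is_cond_mean_given M U Y1 m1"
begin

lemma Z_rv: "Z \<in> measurable M (count_space UNIV)"
  using indep by (simp add: indep_rvs_def)

lemma instr_event: "{x\<in>space M. P (Z x)} \<in> events"
  using measurable_sets[OF Z_rv, of "{z. P z}"] by (simp add: vimage_def Int_def conj_commute)

lemma covar_instr_self:
  "covar M (Zr Z l) (Zr Z l) = prob {x\<in>space M. Z x l} - (prob {x\<in>space M. Z x l})\<^sup>2"
proof -
  have "(\<integral>x. Zr Z l x \<partial>M) = (\<integral>x. indicator {x\<in>space M. Z x l} x \<partial>M)"
    "(\<integral>x. Zr Z l x * Zr Z l x \<partial>M) = (\<integral>x. indicator {x\<in>space M. Z x l} x \<partial>M)"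
    by (auto simp: Zr_def indicator_def intro!: Bochner_Integration.integral_cong)
  then show ?thesis
    using instr_event[of "\<lambda>z. z l"] unfolding covar_def by (simp add: power2_eq_square)
qed

lemma prob_instr_off_pos: "0 < prob {x\<in>space M. \<not> Z x l}"
proof -
  have "prob {x\<in>space M. Z x l} < 1"
    using SigmaZ_pd_imp_covar_diag_pos[OF SigmaZ, of l] instr_pos[of l]
    by (simp add: covar_instr_self pz_def power2_eq_square)
  moreover have "{x\<in>space M. \<not> Z x l} = space M - {x\<in>space M. Z x l}"
    by auto
  ultimately show ?thesis
    using prob_compl[OF instr_event[of "\<lambda>z. z l"]] by simp
qed

lemma sum_instr_weight: "(\<Sum>z\<in>UNIV. instr_weight M Z l z) = 0"
proof -
  have "cexp_ev M (\<lambda>x. 1) {x\<in>space M. P (Z x)} = 1" if "0 < prob {x\<in>space M. P (Z x)}" for P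
    unfolding cexp_ev_def using instr_event[of P] that by simp
  from this[of "\<lambda>z. z l"] this[of "\<lambda>z. \<not> z l"] have "diffZ M Z (\<lambda>x. 1) l = 0"
    unfolding diffZ_def using instr_pos[of l] prob_instr_off_pos[of l] by (simp add: pz_def)
  then show ?thesis
    using diffZ_fun_eq_sum[OF Z_rv, of "\<lambda>_. 1" l] by simp
qed

lemma expectation_step_U:
  assumes "c \<in> {0..1}"
  shows "(\<integral>x. (if U x \<le> c then 1 else 0) \<partial>M) = c"
  using integral_uniform_01[OF U_rv U_unif, of "\<lambda>u. if u \<le> c then 1 else 0"] integral_step_01[of c] assms
  by simp

lemma pi_fs_eq_sum: "pi_fs M V U Z l = (\<Sum>z\<in>UNIV. instr_weight M Z l z * V z)"
proof -
  define Phi where "Phi = (\<lambda>w::real \<times> real \<times> real. \<lambda>z. if snd (snd w) \<le> V z then 1 else 0 :: real)"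
  have Phi_meas: "(\<lambda>w. Phi w z) \<in> borel_measurable (borel \<Otimes>\<^sub>M borel \<Otimes>\<^sub>M borel)" for z
    unfolding Phi_def by measurable
  have Phi_int: "integrable M (\<lambda>x. Phi (Y0 x, Y1 x, U x) z)" for z
    using U_rv by (intro integrable_const_bound[where B=1]) (auto simp: Phi_def)
  have "pi_fs M V U Z l = diffZ M Z (\<lambda>x. Phi (Y0 x, Y1 x, U x) (Z x)) l"
    unfolding pi_fs_def Dobs_def Phi_def by simp
  also have "\<dots> = (\<Sum>z\<in>UNIV. instr_weight M Z l z * (\<integral>x. Phi (Y0 x, Y1 x, U x) z \<partial>M))"
    by (rule diffZ_indep_eq_sum[OF indep Phi_meas Phi_int])
  also have "\<dots> = (\<Sum>z\<in>UNIV. instr_weight M Z l z * V z)"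
    using expectation_step_U V_range by (simp add: Phi_def)
  finally show ?thesis .
qed

lemma set_integrable_m0: "set_integrable lborel {0..1} m0"
  and set_integrable_m1: "set_integrable lborel {0..1} m1"
  using is_cond_mean_given_uniform(2)[OF U_rv U_unif Y0_int m0 borel_measurable_const order.refl]
    is_cond_mean_given_uniform(2)[OF U_rv U_unif Y1_int m1 borel_measurable_const order.refl]
  by auto

lemma set_integrable_MTE: "set_integrable lborel {0..1} (\<lambda>u. m1 u - m0 u)"
  using set_integrable_m0 set_integrable_m1 by simp

lemma expectation_outcome_at_threshold:
  "(\<integral>x. (if U x \<le> c then 1 else 0) * Y1 x + (1 - (if U x \<le> c then 1 else 0)) * Y0 x \<partial>M)
    = (\<integral>x. Y0 x \<partial>M) + (LINT u:{0..1}|lborel. (m1 u - m0 u) * (if u \<le> c then 1 else 0))"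
proof -
  let ?s = "\<lambda>u. if u \<le> c then 1 else 0 :: real"
  have step_int: "integrable M (\<lambda>x. ?s (U x) * Y x)" if "integrable M Y" for Y
    using that U_rv borel_measurable_integrable[OF that]
    by (intro Bochner_Integration.integrable_bound[OF that]) auto
  have step_cond_mean: "(\<integral>x. ?s (U x) * Y x \<partial>M) = (LINT u:{0..1}|lborel. ?s u * m u)"
    if "integrable M Y" "is_cond_mean_given M U Y m" for Y m
    using is_cond_mean_given_uniform(1)[OF U_rv U_unif that, of ?s 1] by simp
  have "(\<integral>x. ?s (U x) * Y1 x + (1 - ?s (U x)) * Y0 x \<partial>M)
      = (\<integral>x. Y0 x + (?s (U x) * Y1 x - ?s (U x) * Y0 x) \<partial>M)"
    by (simp add: algebra_simps)
  also have "\<dots> = (\<integral>x. Y0 x \<partial>M) + ((LINT u:{0..1}|lborel. ?s u * m1 u) - (LINT u:{0..1}|lborel. ?s u * m0 u))"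
    using Y0_int Y1_int step_int step_cond_mean m0 m1 by simp
  also have "\<dots> = (\<integral>x. Y0 x \<partial>M) + (LINT u:{0..1}|lborel. (m1 u - m0 u) * ?s u)"
    using set_integrable_mult_bounded_borel_01[OF set_integrable_m0 bounded_borel_01_step]
      set_integrable_mult_bounded_borel_01[OF set_integrable_m1 bounded_borel_01_step]
    by (simp add: left_diff_distrib mult.commute)
  finally show ?thesis .
qed

lemma rho_rf_eq_sum:
  "rho_rf M V U Z Y0 Y1 l
    = (\<Sum>z\<in>UNIV. instr_weight M Z l z * (LINT u:{0..1}|lborel. (m1 u - m0 u) * (if u \<le> V z then 1 else 0)))"
proof -
  \<comment> \<open>the outcome realised when the instrument is set to z, where w = (y0, y1, u)\<close>
  define Phi where "Phi = (\<lambda>w::real \<times> real \<times> real. \<lambda>z.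
    (if snd (snd w) \<le> V z then 1 else 0) * fst (snd w) + (1 - (if snd (snd w) \<le> V z then 1 else 0)) * fst w)"
  have Phi_meas: "(\<lambda>w. Phi w z) \<in> borel_measurable (borel \<Otimes>\<^sub>M borel \<Otimes>\<^sub>M borel)" for z
    unfolding Phi_def by measurable
  have Phi_int: "integrable M (\<lambda>x. Phi (Y0 x, Y1 x, U x) z)" for z
  proof (rule Bochner_Integration.integrable_bound)
    show "integrable M (\<lambda>x. \<bar>Y0 x\<bar> + \<bar>Y1 x\<bar>)"
      using Y0_int Y1_int by auto
    show "(\<lambda>x. Phi (Y0 x, Y1 x, U x) z) \<in> borel_measurable M"
      using measurable_compose[OF _ Phi_meas] indep by (auto simp: indep_rvs_def)
    show "AE x in M. norm (Phi (Y0 x, Y1 x, U x) z) \<le> norm (\<bar>Y0 x\<bar> + \<bar>Y1 x\<bar>)"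
      by (intro AE_I2) (auto simp: Phi_def)
  qed
  have "rho_rf M V U Z Y0 Y1 l = diffZ M Z (\<lambda>x. Phi (Y0 x, Y1 x, U x) (Z x)) l"
    unfolding rho_rf_def Yobs_def Dobs_def Phi_def by simp
  also have "\<dots> = (\<Sum>z\<in>UNIV. instr_weight M Z l z * (\<integral>x. Phi (Y0 x, Y1 x, U x) z \<partial>M))"
    by (rule diffZ_indep_eq_sum[OF indep Phi_meas Phi_int])
  also have "\<dots> = (\<Sum>z\<in>UNIV. instr_weight M Z l z * (\<integral>x. Y0 x \<partial>M))
      + (\<Sum>z\<in>UNIV. instr_weight M Z l z * (LINT u:{0..1}|lborel. (m1 u - m0 u) * (if u \<le> V z then 1 else 0)))"
    by (simp add: Phi_def expectation_outcome_at_threshold distrib_left sum.distrib)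
  finally show ?thesis
    by (simp add: sum_distrib_right[symmetric] sum_instr_weight)
qed

lemma hfun_eq_sum:
  "hfun M V Z l u = (\<Sum>z\<in>UNIV. instr_weight M Z l z / pi_fs M V U Z l * (if u \<le> V z then 1 else 0))"
  unfolding hfun_def diffZ_fun_eq_sum[OF Z_rv, of "\<lambda>z. if u \<le> V z then 1 else 0"]
    diffZ_fun_eq_sum[OF Z_rv, of V] pi_fs_eq_sum
  by (simp add: sum_divide_distrib)

lemma bounded_borel_01_hfun: "bounded_borel_01 (hfun M V Z l)"
  unfolding hfun_eq_sum[abs_def]
  by (intro bounded_borel_01_sum bounded_borel_01_mult bounded_borel_01_const bounded_borel_01_step) auto

lemma integral_hfun: "(LINT u:{0..1}|lborel. hfun M V Z l u) = 1"
proof -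
  have "(LINT u:{0..1}|lborel. hfun M V Z l u)
      = (\<Sum>z\<in>UNIV. instr_weight M Z l z / pi_fs M V U Z l * (LINT u:{0..1}|lborel. (if u \<le> V z then 1 else 0)))"
    unfolding hfun_eq_sum
    by (subst set_integral_sum) (auto intro!: set_integrable_bounded_borel_01 bounded_borel_01_divide
        bounded_borel_01_mult bounded_borel_01_const bounded_borel_01_step)
  also have "\<dots> = (\<Sum>z\<in>UNIV. instr_weight M Z l z * V z) / pi_fs M V U Z l"
    using V_range by (simp add: integral_step_01 sum_divide_distrib)
  also have "\<dots> = 1"
    using first_stage_pos[of l] by (simp add: pi_fs_eq_sum)
  finally show ?thesis .
qed

lemma integral_MTE_hfun: "(LINT u:{0..1}|lborel. (m1 u - m0 u) * hfun M V Z l u) = Wald M V U Z Y0 Y1 l"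
proof -
  have "(LINT u:{0..1}|lborel. (m1 u - m0 u) * hfun M V Z l u)
      = (LINT u:{0..1}|lborel. (\<Sum>z\<in>UNIV. instr_weight M Z l z / pi_fs M V U Z l
          * ((m1 u - m0 u) * (if u \<le> V z then 1 else 0))))"
    unfolding hfun_eq_sum sum_distrib_left by (simp add: mult.left_commute)
  also have "\<dots> = (\<Sum>z\<in>UNIV. instr_weight M Z l z / pi_fs M V U Z l
      * (LINT u:{0..1}|lborel. (m1 u - m0 u) * (if u \<le> V z then 1 else 0)))"
    by (subst set_integral_sum)
      (auto intro!: set_integrable_mult_bounded_borel_01[OF set_integrable_MTE] bounded_borel_01_step)
  also have "\<dots> = Wald M V U Z Y0 Y1 l"
    unfolding Wald_def rho_rf_eq_sum by (simp add: sum_divide_distrib)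
  finally show ?thesis .
qed

lemma bounded_borel_01_hbar: "bounded_borel_01 (hbar M V Z w)"
  unfolding hbar_def[abs_def]
  by (intro bounded_borel_01_sum bounded_borel_01_mult bounded_borel_01_const bounded_borel_01_hfun) auto

lemma integral_hbar:
  assumes "sum w UNIV = 1"
  shows "(LINT u:{0..1}|lborel. hbar M V Z w u) = 1"
  unfolding hbar_def using assms
  by (subst set_integral_sum)
    (auto intro!: set_integrable_bounded_borel_01 bounded_borel_01_mult bounded_borel_01_const
      bounded_borel_01_hfun simp: integral_hfun)

lemma integral_MTE_hbar:
  "(LINT u:{0..1}|lborel. (m1 u - m0 u) * hbar M V Z w u) = beta_star M V U Z Y0 Y1 w"
  unfolding hbar_def beta_star_def sum_distrib_left
  by (subst set_integral_sum)
    (auto intro!: set_integrable_mult_bounded_borel_01[OF set_integrable_MTE] bounded_borel_01_hfun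
      simp: mult.left_commute integral_MTE_hfun)

lemma bounded_borel_01_efun: "bounded_borel_01 (efun M V Z Q0 Q1 w)"
  unfolding efun_def[abs_def] by (intro bounded_borel_01_diff bounded_borel_01_hbar bounded_borel_01_wP)

lemma integral_efun:
  assumes "sum w UNIV = 1" and "(LINT t:{0..1}|lborel. Fpol V Q0 t - Fpol V Q1 t) \<noteq> 0"
  shows "(LINT u:{0..1}|lborel. efun M V Z Q0 Q1 w u) = 0"
  using set_integral_diff(2)[OF set_integrable_bounded_borel_01[OF bounded_borel_01_hbar[of w]]
      set_integrable_bounded_borel_01[OF bounded_borel_01_wP[of V Q0 Q1]]]
  by (simp add: efun_def integral_hbar[OF assms(1)] integral_wP[OF assms(2)])

lemma beta_star_minus_PRTE:
  "beta_star M V U Z Y0 Y1 w - (LINT u:{0..1}|lborel. (m1 u - m0 u) * wP V Q0 Q1 u)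
    = (LINT u:{0..1}|lborel. (m1 u - m0 u) * efun M V Z Q0 Q1 w u)"
  using set_integral_diff(2)[OF set_integrable_mult_bounded_borel_01[OF set_integrable_MTE bounded_borel_01_hbar[of w]]
      set_integrable_mult_bounded_borel_01[OF set_integrable_MTE bounded_borel_01_wP[of V Q0 Q1]]]
  by (simp add: efun_def right_diff_distrib integral_MTE_hbar)

end

theorem proposition16:
  fixes M :: "'a measure"
    and Y0 Y1 U :: "'a \<Rightarrow> real"
    and Z :: "'a \<Rightarrow> ('L::finite \<Rightarrow> bool)"
    and V :: "('L \<Rightarrow> bool) \<Rightarrow> real"
    and Q0 Q1 :: "('L \<Rightarrow> bool) pmf"
    and w :: "'L \<Rightarrow> real"
    and m0 m1 :: "real \<Rightarrow> real"
    and Mset :: "((real \<Rightarrow> real) \<times> (real \<Rightarrow> real)) set"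
  assumes L2: "CARD('L) \<ge> 2"
    and P: "prob_space M"
    and Y0_rv: "Y0 \<in> borel_measurable M" and Y1_rv: "Y1 \<in> borel_measurable M"
    and Y0_sq: "integrable M (\<lambda>x. (Y0 x)\<^sup>2)" and Y1_sq: "integrable M (\<lambda>x. (Y1 x)\<^sup>2)"
    and U_rv: "U \<in> borel_measurable M"
    and Z_rv: "Z \<in> measurable M (count_space UNIV)"
    \<comment> \<open>(LI): U ~ Uniform(0,1), V takes values in [0,1] so that p(z) = V(z)\<close>
    and U_unif: "distr M lborel U = uniform_measure lborel {0..1}"
    and V_range: "\<And>z. V z \<in> {0..1}"
    \<comment> \<open>(A1): (Y(0), Y(1), D(.)) independent of Z; under (LI) D(.) is determined by U\<close>
    and A1: "indep_rvs M (borel \<Otimes>\<^sub>M borel \<Otimes>\<^sub>M borel) (\<lambda>x. (Y0 x, Y1 x, U x))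
               (count_space UNIV) Z"
    \<comment> \<open>(A2): monotonicity\<close>
    and A2: "\<And>z z'. (\<forall>l. z l \<longrightarrow> z' l) \<Longrightarrow> V z \<le> V z'"
    \<comment> \<open>(A3)\<close>
    and A3_p: "\<And>l. pz M Z l > 0"
    and A3_pi: "\<And>l. pi_fs M V U Z l > 0"
    and A3_Sigma: "SigmaZ_pd M Z"
    \<comment> \<open>Gamma^Wald positive definite\<close>
    and Gamma_pd: "pos_def (GammaWald M V U Z Y0 Y1)"
    \<comment> \<open>policy weights well defined\<close>
    and policy_nondeg: "(LINT t:{0..1}|lborel. Fpol V Q0 t - Fpol V Q1 t) \<noteq> 0"
    \<comment> \<open>w is omega^PRTE\<close>
    and w_PRTE: "is_omega_PRTE M V U Z Y0 Y1 Q0 Q1 w"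
    \<comment> \<open>true marginal treatment response functions m_d(u) = E[Y(d) | U = u]; MTE = m1 - m0\<close>
    and m0_def: "is_cond_mean_given M U Y0 m0"
    and m1_def: "is_cond_mean_given M U Y1 m1"
    and true_in: "(m0, m1) \<in> Mset"
  shows
    "(LINT u:{0..1}|lborel. efun M V Z Q0 Q1 w u) = 0
     \<and> beta_star M V U Z Y0 Y1 w - (LINT u:{0..1}|lborel. (m1 u - m0 u) * wP V Q0 Q1 u)
         = (LINT u:{0..1}|lborel. (m1 u - m0 u) * efun M V Z Q0 Q1 w u)
     \<and> (\<forall>B::real. (\<forall>u\<in>{0..1}. \<forall>v\<in>{0..1}. \<bar>(m1 u - m0 u) - (m1 v - m0 v)\<bar> \<le> B * \<bar>u - v\<bar>) \<longrightarrow>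
          \<bar>beta_star M V U Z Y0 Y1 w - (LINT u:{0..1}|lborel. (m1 u - m0 u) * wP V Q0 Q1 u)\<bar>
            \<le> B / (2 * sqrt 3) * sqrt (LINT u:{0..1}|lborel. (efun M V Z Q0 Q1 w u)\<^sup>2))
     \<and> (let MS = {(a, b) \<in> Mset. \<forall>l. (LINT u:{0..1}|lborel. (b u - a u) * hfun M V Z l u)
                                       = Wald M V U Z Y0 Y1 l};
            Dl = (\<lambda>(a, b). ereal (LINT u:{0..1}|lborel. (b u - a u) * efun M V Z Q0 Q1 w u))
        in ereal (beta_star M V U Z Y0 Y1 w - (LINT u:{0..1}|lborel. (m1 u - m0 u) * wP V Q0 Q1 u))
             \<in> {(INF p\<in>MS. Dl p) .. (SUP p\<in>MS. Dl p)})"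
proof -
  interpret prob_space M
    by (rule P)
  interpret latent_index_model M Y0 Y1 U Z V m0 m1
    using square_integrable_imp_integrable[OF Y0_rv Y0_sq] square_integrable_imp_integrable[OF Y1_rv Y1_sq]
      U_rv U_unif V_range A1 A3_p A3_Sigma A3_pi m0_def m1_def
    by unfold_locales
  have w_sum: "sum w UNIV = 1"
    using w_PRTE unfolding is_omega_PRTE_def Sset_def prob_simplex_def by blast
  have MTE_meas: "(\<lambda>u. m1 u - m0 u) \<in> borel_measurable borel"
    using m0_def m1_def unfolding is_cond_mean_given_def by auto
  define MS where "MS = {(a, b) \<in> Mset. \<forall>l. (LINT u:{0..1}|lborel. (b u - a u) * hfun M V Z l u)
    = Wald M V U Z Y0 Y1 l}"
  define Dl where "Dl = (\<lambda>(a, b). ereal (LINT u:{0..1}|lborel. (b u - a u) * efun M V Z Q0 Q1 w u))"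
  have "(m0, m1) \<in> MS"
    unfolding MS_def using true_in by (simp add: integral_MTE_hfun)
  then have "Dl (m0, m1) \<in> {(INF p\<in>MS. Dl p) .. (SUP p\<in>MS. Dl p)}"
    by (auto intro: INF_lower SUP_upper)
  then show ?thesis
    unfolding beta_star_minus_PRTE Let_def MS_def[symmetric] Dl_def[symmetric]
    using integral_efun[OF w_sum policy_nondeg]
      Lipschitz_integral_error_bound[OF MTE_meas _ bounded_borel_01_efun integral_efun[OF w_sum policy_nondeg]]
    by (simp add: Dl_def)
qed

end
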